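(* Let $n\ge0$. Every $f\in Mlt(Q_n)$ has order $1$, $2$ or $4$; in particular $f$ is a product of disjoint $2$-cycles and $4$-cycles.
   Context: Cayley--Dickson loops: $Q_0=\{1,-1\}\subset\mathbb{R}$ with conjugation $x^*=x$. For $n\ge1$, $Q_n=\{(x,0),(x,1)\mid x\in Q_{n-1}\}$ with multiplication $(x,0)(y,0)=(xy,0)$, $(x,0)(y,1)=(yx,1)$, $(x,1)(y,0)=(xy^*,1)$, $(x,1)(y,1)=(-y^*x,0)$ and conjugation $(x,0)^*=(x^*,0)$, $(x,1)^*=(-x,1)$, where $-(x,a)=(-x,a)$. $Q_n$ is a loop with neutral element $1=(1,0,\dots,0)$. For a loop $Q$, $L_x(a)=xa$, $R_x(a)=ax$, $Mlt(Q)=\langle L_x,R_x\mid x\in Q\rangle\le Sym(Q)$. *)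

theory Defs
  imports "HOL-Algebra.Multiplicative_Group" "HOL-Algebra.Bij" "HOL-Algebra.Generated_Groups"
begin

text \<open>Elements of the Cayley--Dickson loops: Base x stands for x in Q_0 (a subset of the
integers, here {1,-1}); Pair x a stands for the pair (x,a) with a bit a (False = 0, True = 1).\<close>

datatype cd = Base int | Pair cd bool

fun cd_neg :: "cd \<Rightarrow> cd" where
  "cd_neg (Base x) = Base (- x)"
| "cd_neg (Pair x a) = Pair (cd_neg x) a"

fun cd_conj :: "cd \<Rightarrow> cd" where
  "cd_conj (Base x) = Base x"
| "cd_conj (Pair x False) = Pair (cd_conj x) False"
| "cd_conj (Pair x True) = Pair (cd_neg x) True"

lemma size_cd_neg [simp]: "size (cd_neg x) = size x"
  by (induction x) auto

lemma size_cd_conj [simp]: "size (cd_conj x) = size x"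
  by (induction x rule: cd_conj.induct) auto

function (sequential) cd_mult :: "cd \<Rightarrow> cd \<Rightarrow> cd" where
  "cd_mult (Base x) (Base y) = Base (x * y)"
| "cd_mult (Pair x False) (Pair y False) = Pair (cd_mult x y) False"
| "cd_mult (Pair x False) (Pair y True) = Pair (cd_mult y x) True"
| "cd_mult (Pair x True) (Pair y False) = Pair (cd_mult x (cd_conj y)) True"
| "cd_mult (Pair x True) (Pair y True) = Pair (cd_neg (cd_mult (cd_conj y) x)) False"
| "cd_mult _ _ = Base 0" \<comment> \<open>arbitrary junk value; never used on elements of the same Q_n\<close>
  by pat_completeness auto
termination
  by (relation "measure (\<lambda>(x, y). size x + size y)") auto

fun Q :: "nat \<Rightarrow> cd set" where
  "Q 0 = {Base 1, Base (-1)}"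
| "Q (Suc n) = {Pair x a | x a. x \<in> Q n}"

definition Lmap :: "nat \<Rightarrow> cd \<Rightarrow> (cd \<Rightarrow> cd)" where
  "Lmap n x = restrict (\<lambda>a. cd_mult x a) (Q n)"

definition Rmap :: "nat \<Rightarrow> cd \<Rightarrow> (cd \<Rightarrow> cd)" where
  "Rmap n x = restrict (\<lambda>a. cd_mult a x) (Q n)"

definition Mlt :: "nat \<Rightarrow> (cd \<Rightarrow> cd) set" where
  "Mlt n = generate (BijGroup (Q n)) (Lmap n ` Q n \<union> Rmap n ` Q n)"

end

theory Submission
  imports Defs "HOL-Combinatorics.Cycles"
begin

(* Forgetting signs, Q_n / {1,-1} is an elementary abelian 2-group: the map proj below
   replaces the sign in Base by 1 and turns cd_mult into the componentwise xor proj_mult of the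
   bit strings.  Call f a signed translation of Q_n if f permutes Q_n, commutes with negation,
   and induces a translation by some proj c on Q_n / {1,-1}.  Every L_x and R_x is a signed
   translation, and signed translations form a subgroup of Sym(Q_n), hence contain Mlt(Q_n).
   For a signed translation f, f (f a) has the same image as a (a translation applied twice is
   the identity in an elementary abelian 2-group), so f (f a) = a or f (f a) = -a; since f
   commutes with negation, f^4 = id. *)


lemma cd_neg_neg [simp]: "cd_neg (cd_neg x) = x"
  by (induction x) auto

lemma cd_conj_conj [simp]: "cd_conj (cd_conj x) = x"
  by (induction x rule: cd_conj.induct) auto

lemma cd_neg_inject [simp]: "cd_neg x = cd_neg y \<longleftrightarrow> x = y"
  by (metis cd_neg_neg)

lemma cd_conj_inject [simp]: "cd_conj x = cd_conj y \<longleftrightarrow> x = y"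
  by (metis cd_conj_conj)

lemma cd_conj_neg: "cd_conj (cd_neg x) = cd_neg (cd_conj x)"
  by (induction x rule: cd_conj.induct) auto

lemma cd_mult_neg: "cd_mult x (cd_neg y) = cd_neg (cd_mult x y) \<and> cd_mult (cd_neg x) y = cd_neg (cd_mult x y)"
  by (induction x y rule: cd_mult.induct) (auto simp: cd_conj_neg)

lemma cd_mult_neg_right: "cd_mult x (cd_neg y) = cd_neg (cd_mult x y)"
  using cd_mult_neg by blast

lemma cd_mult_neg_left: "cd_mult (cd_neg x) y = cd_neg (cd_mult x y)"
  using cd_mult_neg by blast


section \<open>Forgetting signs\<close>

text \<open>proj x is x with its sign replaced by +1; it represents the class of x modulo {1,-1}.
  On these representatives, multiplication becomes the componentwise xor proj_mult.\<close>

fun proj :: "cd \<Rightarrow> cd" where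
  "proj (Base x) = Base 1"
| "proj (Pair x a) = Pair (proj x) a"

fun proj_mult :: "cd \<Rightarrow> cd \<Rightarrow> cd" where
  "proj_mult (Pair x a) (Pair y b) = Pair (proj_mult x y) (a \<noteq> b)"
| "proj_mult _ _ = Base 1"

lemma proj_neg [simp]: "proj (cd_neg x) = proj x"
  by (induction x) auto

lemma proj_conj [simp]: "proj (cd_conj x) = proj x"
  by (induction x rule: cd_conj.induct) auto

lemma proj_mult_commute: "proj_mult x y = proj_mult y x"
  by (induction x y rule: proj_mult.induct) auto

lemma proj_mult_assoc: "proj_mult (proj_mult x y) z = proj_mult x (proj_mult y z)"
  by (induction x y arbitrary: z rule: proj_mult.induct) (case_tac z; auto)+

lemma proj_cd_mult: "proj (cd_mult x y) = proj_mult (proj x) (proj y)"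
  by (induction x y rule: cd_mult.induct) (auto simp: proj_mult_commute)

lemma proj_mult_twice: "a \<in> Q n \<Longrightarrow> c \<in> Q n \<Longrightarrow> proj_mult (proj c) (proj_mult (proj c) (proj a)) = proj a"
  by (induction n arbitrary: a c) auto

lemma proj_eq_imp_eq_or_neg: "a \<in> Q n \<Longrightarrow> b \<in> Q n \<Longrightarrow> proj a = proj b \<Longrightarrow> a = b \<or> a = cd_neg b"
  by (induction n arbitrary: a b) (auto, metis)


lemma Pair_in_Q_Suc [simp]: "Pair x a \<in> Q (Suc n) \<longleftrightarrow> x \<in> Q n"
  by auto

lemma Q_nonempty: "Q n \<noteq> {}"
  by (induction n) auto

lemma finite_Q: "finite (Q n)"
proof (induction n)
  case (Suc n)
  have "Q (Suc n) = (\<lambda>(x, a). Pair x a) ` (Q n \<times> UNIV)" by auto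
  then show ?case using Suc by simp
qed auto

lemma cd_neg_in_Q: "x \<in> Q n \<Longrightarrow> cd_neg x \<in> Q n"
  by (induction n arbitrary: x) auto

lemma cd_conj_in_Q: "x \<in> Q n \<Longrightarrow> cd_conj x \<in> Q n"
proof (induction n arbitrary: x)
  case (Suc n)
  then obtain x' a where "x = Pair x' a" "x' \<in> Q n" by auto
  then show ?case using Suc.IH by (cases a) (auto simp: cd_neg_in_Q)
qed auto

lemma cd_mult_in_Q: "x \<in> Q n \<Longrightarrow> y \<in> Q n \<Longrightarrow> cd_mult x y \<in> Q n"
proof (induction n arbitrary: x y)
  case (Suc n)
  then obtain x' a y' b where "x = Pair x' a" "y = Pair y' b" "x' \<in> Q n" "y' \<in> Q n" by auto
  then show ?case using Suc.IH by (cases a; cases b) (auto simp: cd_neg_in_Q cd_conj_in_Q)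
qed auto

lemma cd_mult_cancel:
  assumes "x \<in> Q n" "a \<in> Q n" "b \<in> Q n"
  shows "(cd_mult x a = cd_mult x b \<longrightarrow> a = b) \<and> (cd_mult a x = cd_mult b x \<longrightarrow> a = b)"
  using assms
proof (induction n arbitrary: x a b)
  case (Suc n)
  obtain x' c where x: "x = Pair x' c" "x' \<in> Q n" using Suc.prems by auto
  obtain a' d where a: "a = Pair a' d" "a' \<in> Q n" using Suc.prems by auto
  obtain b' e where b: "b = Pair b' e" "b' \<in> Q n" using Suc.prems by auto
  note IH = Suc.IH[OF x(2) a(2) b(2)]
    Suc.IH[OF x(2) cd_conj_in_Q[OF a(2)] cd_conj_in_Q[OF b(2)]]
    Suc.IH[OF cd_conj_in_Q[OF x(2)] a(2) b(2)]
  show ?case using x a b IH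
    by (cases c; cases d; cases e) auto
qed auto


lemma Bij_mem: "f \<in> Bij S \<Longrightarrow> a \<in> S \<Longrightarrow> f a \<in> S"
  using Bij_imp_funcset by blast

lemma restrict_in_Bij:
  assumes "finite S" "h ` S \<subseteq> S" "inj_on h S"
  shows "restrict h S \<in> Bij S"
proof -
  have "h ` S = S" using endo_inj_surj[OF assms] .
  then have "bij_betw h S S" using assms(3) by (simp add: bij_betw_def)
  then show ?thesis unfolding Bij_def by (simp add: bij_betw_restrict_eq)
qed

lemma Lmap_in_Bij:
  assumes x: "x \<in> Q n"
  shows "Lmap n x \<in> Bij (Q n)"
  unfolding Lmap_def
proof (rule restrict_in_Bij[OF finite_Q])
  show "(\<lambda>a. cd_mult x a) ` Q n \<subseteq> Q n" using cd_mult_in_Q[OF x] by blast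
  show "inj_on (\<lambda>a. cd_mult x a) (Q n)" using cd_mult_cancel[OF x] by (blast intro: inj_onI)
qed

lemma Rmap_in_Bij:
  assumes x: "x \<in> Q n"
  shows "Rmap n x \<in> Bij (Q n)"
  unfolding Rmap_def
proof (rule restrict_in_Bij[OF finite_Q])
  show "(\<lambda>a. cd_mult a x) ` Q n \<subseteq> Q n" using cd_mult_in_Q[OF _ x] by blast
  show "inj_on (\<lambda>a. cd_mult a x) (Q n)" using cd_mult_cancel[OF x] by (blast intro: inj_onI)
qed

lemma BijGroup_mult: "f \<in> Bij S \<Longrightarrow> g \<in> Bij S \<Longrightarrow> f \<otimes>\<^bsub>BijGroup S\<^esub> g = compose S f g"
  by (simp add: BijGroup_def)

lemma BijGroup_inv_apply:
  assumes "f \<in> Bij S" "a \<in> S"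
  shows "(inv\<^bsub>BijGroup S\<^esub> f) (f a) = a" and "f ((inv\<^bsub>BijGroup S\<^esub> f) a) = a"
proof -
  have "bij_betw f S S" using assms(1) unfolding Bij_def by simp
  then show "(inv\<^bsub>BijGroup S\<^esub> f) (f a) = a" "f ((inv\<^bsub>BijGroup S\<^esub> f) a) = a"
    using assms by (auto simp: inv_BijGroup bij_betw_def f_inv_into_f inv_into_f_f Bij_mem)
qed

lemma BijGroup_pow: "f \<in> Bij S \<Longrightarrow> f [^]\<^bsub>BijGroup S\<^esub> (k::nat) = (\<lambda>x\<in>S. (f ^^ k) x)"
proof (induction k)
  case 0
  then show ?case by (simp add: BijGroup_def)
next
  case (Suc k)
  have "f \<in> carrier (BijGroup S)" using Suc.prems by (simp add: BijGroup_def)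
  then have "f [^]\<^bsub>BijGroup S\<^esub> k \<in> Bij S"
    using monoid.nat_pow_closed[OF group.is_monoid[OF group_BijGroup]] by (simp add: BijGroup_def)
  then have "f [^]\<^bsub>BijGroup S\<^esub> Suc k = compose S (f [^]\<^bsub>BijGroup S\<^esub> k) f"
    using Suc.prems by (simp add: BijGroup_mult)
  also have "\<dots> = (\<lambda>x\<in>S. (f ^^ Suc k) x)"
    using Bij_mem[OF Suc.prems] Suc.IH[OF Suc.prems]
    by (auto simp: compose_def funpow_Suc_right simp del: funpow.simps intro!: restrict_ext)
  finally show ?case .
qed

lemma BijGroup_ord_dvd:
  assumes "f \<in> Bij S" "\<And>a. a \<in> S \<Longrightarrow> (f ^^ k) a = a"
  shows "group.ord (BijGroup S) f dvd k"
proof -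
  have f: "f \<in> carrier (BijGroup S)" using assms(1) by (simp add: BijGroup_def)
  have "f [^]\<^bsub>BijGroup S\<^esub> k = (\<lambda>x\<in>S. x)"
    using assms by (auto simp: BijGroup_pow intro!: restrict_ext)
  also have "\<dots> = \<one>\<^bsub>BijGroup S\<^esub>" by (simp add: BijGroup_def)
  finally show ?thesis using group.pow_eq_id[OF group_BijGroup f] by blast
qed

lemma cycle_length_dvd:
  assumes "(f ^^ k) a = a"
  shows "(LEAST m::nat. 0 < m \<and> (f ^^ m) a = a) dvd k"
  using least_power_minimal[OF assms] unfolding least_power_def by (simp add: conj_commute)


section \<open>Signed translations\<close>

definition signed_translations :: "nat \<Rightarrow> (cd \<Rightarrow> cd) set" where
  "signed_translations n = {f \<in> Bij (Q n). (\<forall>a\<in>Q n. f (cd_neg a) = cd_neg (f a))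
     \<and> (\<exists>c\<in>Q n. \<forall>a\<in>Q n. proj (f a) = proj_mult (proj c) (proj a))}"

lemma signed_translationsI:
  assumes "f \<in> Bij (Q n)" "\<And>a. a \<in> Q n \<Longrightarrow> f (cd_neg a) = cd_neg (f a)"
    and "c \<in> Q n" "\<And>a. a \<in> Q n \<Longrightarrow> proj (f a) = proj_mult (proj c) (proj a)"
  shows "f \<in> signed_translations n"
  using assms unfolding signed_translations_def by blast

lemma signed_translationsE:
  assumes "f \<in> signed_translations n"
  obtains c where "f \<in> Bij (Q n)" "\<And>a. a \<in> Q n \<Longrightarrow> f (cd_neg a) = cd_neg (f a)"
    and "c \<in> Q n" "\<And>a. a \<in> Q n \<Longrightarrow> proj (f a) = proj_mult (proj c) (proj a)"
  using assms unfolding signed_translations_def by blast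

lemma Lmap_signed_translation: "x \<in> Q n \<Longrightarrow> Lmap n x \<in> signed_translations n"
  by (rule signed_translationsI[OF Lmap_in_Bij])
    (auto simp: Lmap_def cd_neg_in_Q cd_mult_neg_right proj_cd_mult)

lemma Rmap_signed_translation: "x \<in> Q n \<Longrightarrow> Rmap n x \<in> signed_translations n"
  by (rule signed_translationsI[OF Rmap_in_Bij])
    (auto simp: Rmap_def cd_neg_in_Q cd_mult_neg_left proj_cd_mult proj_mult_commute)

lemma signed_translations_mult:
  assumes "f \<in> signed_translations n" "g \<in> signed_translations n"
  shows "f \<otimes>\<^bsub>BijGroup (Q n)\<^esub> g \<in> signed_translations n"
proof -
  obtain c where f: "f \<in> Bij (Q n)" "\<And>a. a \<in> Q n \<Longrightarrow> f (cd_neg a) = cd_neg (f a)"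
    "c \<in> Q n" "\<And>a. a \<in> Q n \<Longrightarrow> proj (f a) = proj_mult (proj c) (proj a)"
    using assms(1) by (rule signed_translationsE) (rule that)
  obtain d where g: "g \<in> Bij (Q n)" "\<And>a. a \<in> Q n \<Longrightarrow> g (cd_neg a) = cd_neg (g a)"
    "d \<in> Q n" "\<And>a. a \<in> Q n \<Longrightarrow> proj (g a) = proj_mult (proj d) (proj a)"
    using assms(2) by (rule signed_translationsE) (rule that)
  show ?thesis
    unfolding BijGroup_mult[OF f(1) g(1)]
  proof (rule signed_translationsI[OF compose_Bij[OF f(1) g(1)] _ cd_mult_in_Q[OF f(3) g(3)]])
    fix a assume a: "a \<in> Q n"
    show "compose (Q n) f g (cd_neg a) = cd_neg (compose (Q n) f g a)"
      using a cd_neg_in_Q[OF a] Bij_mem[OF g(1) a] f(2) g(2) by (simp add: compose_def)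
    show "proj (compose (Q n) f g a) = proj_mult (proj (cd_mult c d)) (proj a)"
      using a Bij_mem[OF g(1) a] f(4) g(4) by (simp add: compose_def proj_cd_mult proj_mult_assoc)
  qed
qed

text \<open>The inverse of a translation by proj c is again the translation by proj c.\<close>

lemma signed_translations_inv:
  assumes "f \<in> signed_translations n"
  shows "inv\<^bsub>BijGroup (Q n)\<^esub> f \<in> signed_translations n"
proof -
  obtain c where f: "f \<in> Bij (Q n)" "\<And>a. a \<in> Q n \<Longrightarrow> f (cd_neg a) = cd_neg (f a)"
    "c \<in> Q n" "\<And>a. a \<in> Q n \<Longrightarrow> proj (f a) = proj_mult (proj c) (proj a)"
    using assms by (rule signed_translationsE) (rule that)
  define g where "g = inv\<^bsub>BijGroup (Q n)\<^esub> f"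
  have g_Bij: "g \<in> Bij (Q n)"
    unfolding g_def inv_BijGroup[OF f(1)] by (rule restrict_inv_into_Bij[OF f(1)])
  show ?thesis
    unfolding g_def[symmetric]
  proof (rule signed_translationsI[OF g_Bij _ f(3)])
    fix a assume a: "a \<in> Q n"
    have ga: "g a \<in> Q n" and fga: "f (g a) = a"
      using Bij_mem[OF g_Bij a] BijGroup_inv_apply(2)[OF f(1) a] by (simp_all add: g_def)
    have "g (cd_neg a) = g (f (cd_neg (g a)))" using f(2)[OF ga] fga by simp
    then show "g (cd_neg a) = cd_neg (g a)"
      using BijGroup_inv_apply(1)[OF f(1) cd_neg_in_Q[OF ga]] by (simp add: g_def)
    have "proj a = proj_mult (proj c) (proj (g a))" using f(4)[OF ga] fga by simp
    then show "proj (g a) = proj_mult (proj c) (proj a)"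
      using proj_mult_twice[OF ga f(3)] by simp
  qed
qed

lemma subgroup_signed_translations: "subgroup (signed_translations n) (BijGroup (Q n))"
proof (rule group.subgroupI[OF group_BijGroup])
  show "signed_translations n \<subseteq> carrier (BijGroup (Q n))"
    by (auto simp: BijGroup_def elim: signed_translationsE)
  obtain x where "x \<in> Q n" using Q_nonempty by blast
  then show "signed_translations n \<noteq> {}" using Lmap_signed_translation by blast
qed (auto intro: signed_translations_inv signed_translations_mult)

lemma Mlt_subset_signed_translations: "Mlt n \<subseteq> signed_translations n"
  unfolding Mlt_def
  by (rule group.generate_subgroup_incl[OF group_BijGroup _ subgroup_signed_translations])
    (auto intro: Lmap_signed_translation Rmap_signed_translation)

text \<open>The key step: f^2 moves each a at most to -a, so f^4 is the identity on Q_n.\<close>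

lemma signed_translation_funpow_four:
  assumes "f \<in> signed_translations n" "a \<in> Q n"
  shows "(f ^^ 4) a = a"
proof -
  obtain c where f: "f \<in> Bij (Q n)" "\<And>a. a \<in> Q n \<Longrightarrow> f (cd_neg a) = cd_neg (f a)"
    "c \<in> Q n" "\<And>a. a \<in> Q n \<Longrightarrow> proj (f a) = proj_mult (proj c) (proj a)"
    using assms(1) by (rule signed_translationsE) (rule that)
  have fa: "f a \<in> Q n" and ffa: "f (f a) \<in> Q n"
    using Bij_mem[OF f(1)] assms(2) by blast+
  have "proj (f (f a)) = proj a"
    using f(4) fa assms(2) proj_mult_twice[OF assms(2) f(3)] by simp
  then have "f (f a) = a \<or> f (f a) = cd_neg a"
    using proj_eq_imp_eq_or_neg[OF ffa assms(2)] by blast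
  moreover have "f (f (cd_neg a)) = cd_neg (f (f a))"
    using f(2) assms(2) fa by simp
  ultimately have "f (f (f (f a))) = a" by auto
  then show ?thesis by (simp add: numeral_eq_Suc)
qed


lemma dvd_four_cases: "(d::nat) dvd 4 \<Longrightarrow> d \<in> {1, 2, 4}"
proof -
  assume d: "d dvd 4"
  then have "d \<le> 4" by (rule dvd_imp_le) simp
  then have "d \<in> {0, 1, 2, 3, 4}" by auto
  then show ?thesis using d by auto
qed

theorem mainTheorem6:
  fixes n :: nat and f :: "cd \<Rightarrow> cd"
  assumes "f \<in> Mlt n"
  shows "group.ord (BijGroup (Q n)) f \<in> {1, 2, 4}
     \<and> (\<forall>a \<in> Q n. (LEAST k::nat. 0 < k \<and> (f ^^ k) a = a) \<in> {1, 2, 4})"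
proof -
  have f: "f \<in> signed_translations n"
    using assms Mlt_subset_signed_translations by blast
  then have "f \<in> Bij (Q n)" by (rule signed_translationsE)
  have four: "(f ^^ 4) a = a" if "a \<in> Q n" for a
    using signed_translation_funpow_four[OF f that] .
  have "group.ord (BijGroup (Q n)) f dvd 4"
    using BijGroup_ord_dvd[OF \<open>f \<in> Bij (Q n)\<close> four] .
  moreover have "(LEAST k::nat. 0 < k \<and> (f ^^ k) a = a) dvd 4" if "a \<in> Q n" for a
    using cycle_length_dvd[OF four[OF that]] .
  ultimately show ?thesis using dvd_four_cases by blast
qed

end
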